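(* Let $G=(V,A)$ be a directed graph and $R,T\subseteq V$ with $R\cap T=\emptyset$. Let $\mathcal{Y}(G)=(\hat V,\hat A)$ be the forking of $G$, and let $\hat R=\{(r,0)\mid r\in R\}$ and $\hat T=\{(t,0)\mid t\in T\}$. Then there is a solution $S\subseteq V\setminus(R\cup T)$ of size at most $k$ for $(G,R,T)$ if and only if there is a solution $\hat S\subseteq \hat V$ of size at most $2k+|R\cup T|$ for $(\mathcal{Y}(G),\hat R,\hat T)$.
   Context: For a directed graph $G=(V,A)$, its forking is the directed graph $\mathcal{Y}(G)=(\hat V,\hat A)$ with $\hat V=V\times\{0,1\}$ and $\hat A=\{((u,0),(v,1))\mid (u,v)\in A\}\cup\{((v,1),(v,0))\mid v\in V\}$. For a directed graph $H$ with vertex set $W$ and subsets $R,T\subseteq W$, a solution for $(H,R,T)$ is a set $S\subseteq W$ such that the induced subgraph $H[R\cup S\cup T]$ contains a directed path from $r$ to $t$ for every $r\in R$ and every $t\in R\cup T$. *)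

theory Defs
  imports Main
begin

text \<open>Directed paths in the induced subgraph H[X] are captured by the reflexive-transitive
  closure of the arcs with both ends in X.\<close>

definition induced_arcs :: "('a \<times> 'a) set \<Rightarrow> 'a set \<Rightarrow> ('a \<times> 'a) set" where
  "induced_arcs A X = A \<inter> (X \<times> X)"

definition is_solution :: "'a set \<Rightarrow> ('a \<times> 'a) set \<Rightarrow> 'a set \<Rightarrow> 'a set \<Rightarrow> 'a set \<Rightarrow> bool" where
  "is_solution W A R T S \<longleftrightarrow> S \<subseteq> W \<and>
     (\<forall>r\<in>R. \<forall>t\<in>R \<union> T. (r, t) \<in> (induced_arcs A (R \<union> S \<union> T))\<^sup>*)"

definition fork_V :: "'a set \<Rightarrow> ('a \<times> nat) set" where
  "fork_V V = V \<times> {0, 1}"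

definition fork_A :: "'a set \<Rightarrow> ('a \<times> 'a) set \<Rightarrow> (('a \<times> nat) \<times> ('a \<times> nat)) set" where
  "fork_A V A = {((u, 0), (v, 1)) | u v. (u, v) \<in> A} \<union> {((v, 1), (v, 0)) | v. v \<in> V}"

end

theory Submission
  imports Defs
begin

text \<open>A solution S of (G, R, T) lifts to the solution S \<times> {0,1} \<union> (R \<union> T) \<times> {1} of the forked
  instance: an arc (u, v) of G becomes the path (u,0) \<rightarrow> (v,1) \<rightarrow> (v,0). Conversely, every arc of
  the forking that enters a 0-copy (v,0) comes from (v,1), so a path between 0-copies only passes
  through vertices v whose two copies are both used, and these vertices carry a solution of G.
  Counting, a forked solution contains (x,1) for every terminal x except possibly one root, so
  2 |S| + |R \<union> T| - 1 \<le> 2k + |R \<union> T|, and parity gives |S| \<le> k.\<close>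

lemma fork_A_into_zero_copy:
  "((u, i), (v, 0)) \<in> fork_A V A \<longleftrightarrow> u = v \<and> i = 1 \<and> v \<in> V"
  by (auto simp: fork_A_def)

lemma fork_path_of_path:
  assumes "(x, y) \<in> (induced_arcs A X)\<^sup>*"
    and "A \<subseteq> V \<times> V"
    and "X \<times> {0, 1} \<subseteq> X'"
  shows "((x, 0), (y, 0)) \<in> (induced_arcs (fork_A V A) X')\<^sup>*"
  using assms(1)
proof (induction rule: rtrancl_induct)
  case base
  show ?case by simp
next
  case (step y z)
  then have "(y, z) \<in> A" "y \<in> X" "z \<in> X"
    by (auto simp: induced_arcs_def)
  then have "((y, 0), (z, 1)) \<in> induced_arcs (fork_A V A) X'"
    and "((z, 1), (z, 0)) \<in> induced_arcs (fork_A V A) X'"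
    using assms(2,3) by (auto simp: induced_arcs_def fork_A_def)
  with step.IH show ?case
    by (meson rtrancl.rtrancl_into_rtrancl)
qed

lemma path_of_fork_path:
  assumes "((r, 0), (x, i)) \<in> (induced_arcs (fork_A V A) X')\<^sup>*"
    and "r \<in> X"
    and both_copies: "\<And>v. (v, 0) \<in> X' \<Longrightarrow> (v, 1) \<in> X' \<Longrightarrow> v \<in> X"
  shows "if i = 0 then (r, x) \<in> (induced_arcs A X)\<^sup>* \<and> x \<in> X
         else \<exists>u. (r, u) \<in> (induced_arcs A X)\<^sup>* \<and> u \<in> X \<and> (u, x) \<in> A"
  using assms(1)
proof (induction rule: rtrancl_induct2)
  case refl
  show ?case using \<open>r \<in> X\<close> by simp
next
  case (step u j v l)
  then have arc: "((u, j), (v, l)) \<in> fork_A V A" and "(u, j) \<in> X'" "(v, l) \<in> X'"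
    by (auto simp: induced_arcs_def)
  from arc consider "j = 0" "l = 1" "(u, v) \<in> A" | "u = v" "j = 1" "l = 0"
    unfolding fork_A_def by blast
  then show ?case
  proof cases
    case 1
    with step.IH show ?thesis by auto
  next
    case 2
    with step.IH obtain w where
      "(r, w) \<in> (induced_arcs A X)\<^sup>*" "w \<in> X" "(w, v) \<in> A"
      by auto
    moreover have "v \<in> X"
      using both_copies \<open>(u, j) \<in> X'\<close> \<open>(v, l) \<in> X'\<close> 2 by simp
    ultimately show ?thesis
      using 2 by (auto simp: induced_arcs_def intro: rtrancl.rtrancl_into_rtrancl)
  qed
qed

lemma fork_path_to_zero_copy_via_one_copy:
  assumes "((r, 0), (x, 0)) \<in> (induced_arcs (fork_A V A) X')\<^sup>*" and "r \<noteq> x"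
  shows "(x, 1) \<in> X'"
  using assms
  by (cases rule: rtranclE) (auto simp: induced_arcs_def fork_A_into_zero_copy)

lemma fork_solution_of_solution:
  assumes "is_solution V A R T S"
    and "A \<subseteq> V \<times> V" and "R \<union> T \<subseteq> V"
  shows "is_solution (fork_V V) (fork_A V A) ((\<lambda>r. (r, 0)) ` R) ((\<lambda>t. (t, 0)) ` T)
           (S \<times> {0, 1} \<union> (R \<union> T) \<times> {1})"
  unfolding is_solution_def
proof (intro conjI ballI)
  show "S \<times> {0, 1} \<union> (R \<union> T) \<times> {1} \<subseteq> fork_V V"
    using assms(1,3) by (auto simp: is_solution_def fork_V_def)
next
  fix r' t' :: "'a \<times> nat"
  assume "r' \<in> (\<lambda>r. (r, 0)) ` R" and "t' \<in> (\<lambda>r. (r, 0)) ` R \<union> (\<lambda>t. (t, 0)) ` T"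
  then obtain r t where "r' = (r, 0)" "t' = (t, 0)" "r \<in> R" "t \<in> R \<union> T"
    by auto
  moreover from this have "(r, t) \<in> (induced_arcs A (R \<union> S \<union> T))\<^sup>*"
    using assms(1) by (auto simp: is_solution_def)
  then have "((r, 0), (t, 0)) \<in> (induced_arcs (fork_A V A)
      ((\<lambda>r. (r, 0)) ` R \<union> (S \<times> {0, 1} \<union> (R \<union> T) \<times> {1}) \<union> (\<lambda>t. (t, 0)) ` T))\<^sup>*"
    by (rule fork_path_of_path[OF _ assms(2)]) auto
  ultimately show "(r', t') \<in> (induced_arcs (fork_A V A)
      ((\<lambda>r. (r, 0)) ` R \<union> (S \<times> {0, 1} \<union> (R \<union> T) \<times> {1}) \<union> (\<lambda>t. (t, 0)) ` T))\<^sup>*"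
    by simp
qed

lemma card_fork_solution_of_solution:
  assumes "finite S" and "finite (R \<union> T)"
  shows "card (S \<times> {0::nat, 1} \<union> (R \<union> T) \<times> {1}) \<le> 2 * card S + card (R \<union> T)"
proof -
  have "card (S \<times> {0::nat, 1} \<union> (R \<union> T) \<times> {1}) \<le> card (S \<times> {0::nat, 1}) + card ((R \<union> T) \<times> {1::nat})"
    by (rule card_Un_le)
  also have "\<dots> = 2 * card S + card (R \<union> T)"
    using assms by (simp add: card_cartesian_product)
  finally show ?thesis .
qed

lemma solution_of_fork_solution:
  assumes "is_solution (fork_V V) (fork_A V A) ((\<lambda>r. (r, 0)) ` R) ((\<lambda>t. (t, 0)) ` T) S'"
  shows "is_solution V A R T {v \<in> V - (R \<union> T). (v, 0) \<in> S' \<and> (v, 1) \<in> S'}"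
    (is "is_solution V A R T ?S")
  unfolding is_solution_def
proof (intro conjI ballI)
  show "?S \<subseteq> V" by blast
next
  fix r t
  assume "r \<in> R" and "t \<in> R \<union> T"
  let ?X' = "(\<lambda>r. (r, 0)) ` R \<union> S' \<union> (\<lambda>t. (t, 0)) ` T"
  have fork_path: "((r, 0), (t, 0)) \<in> (induced_arcs (fork_A V A) ?X')\<^sup>*"
    using assms \<open>r \<in> R\<close> \<open>t \<in> R \<union> T\<close> unfolding is_solution_def by blast
  have both_copies: "v \<in> R \<union> ?S \<union> T" if "(v, 0) \<in> ?X'" "(v, 1) \<in> ?X'" for v
  proof (cases "v \<in> R \<union> T")
    case False
    with that have "(v, 0) \<in> S'" "(v, 1) \<in> S'" by auto
    moreover from this have "v \<in> V"
      using assms by (auto simp: is_solution_def fork_V_def)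
    ultimately show ?thesis using False by blast
  qed blast
  show "(r, t) \<in> (induced_arcs A (R \<union> ?S \<union> T))\<^sup>*"
    using path_of_fork_path[OF fork_path _ both_copies] \<open>r \<in> R\<close> by simp
qed

lemma card_solution_of_fork_solution:
  assumes "is_solution (fork_V V) (fork_A V A) ((\<lambda>r. (r, 0)) ` R) ((\<lambda>t. (t, 0)) ` T) S'"
    and "finite V" and "R \<union> T \<subseteq> V" and "r\<^sub>0 \<in> R"
  shows "2 * card {v \<in> V - (R \<union> T). (v, 0) \<in> S' \<and> (v, 1) \<in> S'} + card (R \<union> T) \<le> Suc (card S')"
    (is "2 * card ?S + _ \<le> _")
proof -
  let ?Y = "(R \<union> T - {r\<^sub>0}) \<times> {1::nat}"
  have "finite S'"
    using assms(1,2) by (auto simp: is_solution_def fork_V_def intro: finite_subset)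
  have "finite ?S" "finite (R \<union> T)"
    using assms(2,3) by (auto intro: finite_subset)
  have "?Y \<subseteq> S'"
  proof
    fix y assume "y \<in> ?Y"
    then obtain x where "y = (x, 1)" "x \<in> R \<union> T" "x \<noteq> r\<^sub>0" by auto
    moreover from this have "((r\<^sub>0, 0), (x, 0)) \<in> (induced_arcs (fork_A V A)
        ((\<lambda>r. (r, 0)) ` R \<union> S' \<union> (\<lambda>t. (t, 0)) ` T))\<^sup>*"
      using assms(1,4) unfolding is_solution_def by blast
    ultimately show "y \<in> S'"
      using fork_path_to_zero_copy_via_one_copy by fastforce
  qed
  then have "?S \<times> {0, 1} \<union> ?Y \<subseteq> S'" by auto
  then have "card (?S \<times> {0, 1} \<union> ?Y) \<le> card S'"
    by (rule card_mono[OF \<open>finite S'\<close>])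
  moreover have "card (?S \<times> {0, 1} \<union> ?Y) = 2 * card ?S + (card (R \<union> T) - 1)"
    using \<open>finite ?S\<close> \<open>finite (R \<union> T)\<close> assms(4)
    by (subst card_Un_disjoint) (auto simp: card_cartesian_product)
  moreover have "card (R \<union> T) \<ge> 1"
    using \<open>finite (R \<union> T)\<close> assms(4) by (auto simp: Suc_le_eq card_gt_0_iff)
  ultimately show ?thesis by linarith
qed

theorem lemma5:
  fixes V :: "'a set" and A :: "('a \<times> 'a) set" and R T :: "'a set" and k :: nat
  assumes "finite V" and "A \<subseteq> V \<times> V" and "R \<subseteq> V" and "T \<subseteq> V" and "R \<inter> T = {}"
  shows "(\<exists>S. S \<subseteq> V - (R \<union> T) \<and> card S \<le> k \<and> is_solution V A R T S) \<longleftrightarrow>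
         (\<exists>S'. card S' \<le> 2 * k + card (R \<union> T) \<and>
               is_solution (fork_V V) (fork_A V A) ((\<lambda>r. (r, 0)) ` R) ((\<lambda>t. (t, 0)) ` T) S')"
proof
  assume "\<exists>S. S \<subseteq> V - (R \<union> T) \<and> card S \<le> k \<and> is_solution V A R T S"
  then obtain S where "S \<subseteq> V - (R \<union> T)" "card S \<le> k" and sol: "is_solution V A R T S"
    by blast
  have "finite S" "finite (R \<union> T)"
    using \<open>S \<subseteq> V - (R \<union> T)\<close> assms(1,3,4) by (auto intro: finite_subset)
  then have "card (S \<times> {0::nat, 1} \<union> (R \<union> T) \<times> {1}) \<le> 2 * k + card (R \<union> T)"
    using card_fork_solution_of_solution[of S R T] \<open>card S \<le> k\<close> by linarith
  moreover have "is_solution (fork_V V) (fork_A V A) ((\<lambda>r. (r, 0)) ` R) ((\<lambda>t. (t, 0)) ` T)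
      (S \<times> {0, 1} \<union> (R \<union> T) \<times> {1})"
    using assms(3,4) by (intro fork_solution_of_solution[OF sol assms(2)]) blast
  ultimately show "\<exists>S'. card S' \<le> 2 * k + card (R \<union> T) \<and>
      is_solution (fork_V V) (fork_A V A) ((\<lambda>r. (r, 0)) ` R) ((\<lambda>t. (t, 0)) ` T) S'"
    by blast
next
  assume "\<exists>S'. card S' \<le> 2 * k + card (R \<union> T) \<and>
      is_solution (fork_V V) (fork_A V A) ((\<lambda>r. (r, 0)) ` R) ((\<lambda>t. (t, 0)) ` T) S'"
  then obtain S' where "card S' \<le> 2 * k + card (R \<union> T)"
    and sol: "is_solution (fork_V V) (fork_A V A) ((\<lambda>r. (r, 0)) ` R) ((\<lambda>t. (t, 0)) ` T) S'"
    by blast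
  define S where "S = {v \<in> V - (R \<union> T). (v, 0) \<in> S' \<and> (v, 1) \<in> S'}"
  show "\<exists>S. S \<subseteq> V - (R \<union> T) \<and> card S \<le> k \<and> is_solution V A R T S"
  proof (cases "R = {}")
    case True
    then show ?thesis by (intro exI[of _ "{}"]) (simp add: is_solution_def)
  next
    case False
    then obtain r\<^sub>0 where "r\<^sub>0 \<in> R" by blast
    moreover have "R \<union> T \<subseteq> V" using assms(3,4) by blast
    ultimately have "2 * card S + card (R \<union> T) \<le> Suc (card S')"
      unfolding S_def by (intro card_solution_of_fork_solution[OF sol assms(1)])
    with \<open>card S' \<le> 2 * k + card (R \<union> T)\<close> have "card S \<le> k" by linarith
    moreover have "is_solution V A R T S"
      unfolding S_def by (rule solution_of_fork_solution[OF sol])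
    moreover have "S \<subseteq> V - (R \<union> T)" by (auto simp: S_def)
    ultimately show ?thesis by blast
  qed
qed

end
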